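(* Let $\Lambda=(\mathcal{L}\subset\mathbb{R}^s,\mathbb{R}^n)$ be a generic cut-and-project scheme with associated matrix $L$ and with self-similarity $A\in\mathbb{R}^{n\times n}$, and let $B\in\mathbb{R}^{(s-n)\times(s-n)}$, $C\in\mathbb{Z}^{s\times s}$ satisfy $\begin{pmatrix}A&O\\O&B\end{pmatrix}L=LC$. Then $\mu_{A,\mathbb{Q}}=\mu_{B,\mathbb{Q}}=\mu_{C,\mathbb{Q}}=\mu_C$. In particular, either $A,B,C$ are all non-singular or all singular. Moreover, $A,B,C$ are either all diagonalizable over $\mathbb{C}$ or all non-diagonalizable over $\mathbb{C}$.
   Context: For a square matrix $T$, $\mu_T$ is its minimal polynomial (monic polynomial in $\mathbb{C}[X]$ of smallest degree with $\mu_T(T)=O$), and, when the eigenvalues of $T$ are algebraic, $\mu_{T,\mathbb{Q}}$ is the monic polynomial in $\mathbb{Q}[X]$ of smallest degree with $\mu_{T,\mathbb{Q}}(T)=O$. A lattice $\mathcal{L}\subset\mathbb{R}^s$ is $\{L\mathbf{r}:\mathbf{r}\in\mathbb{Z}^s\}$ for a non-singular $L\in\mathbb{R}^{s\times s}$. For $1\le n<s$, the scheme $(\mathcal{L}\subset\mathbb{R}^s,\mathbb{R}^n)$ has projections $\pi_\parallel(\mathbf{x})=(x_1,\dots,x_n)^\top$, $\pi_\perp(\mathbf{x})=(x_{n+1},\dots,x_s)^\top$; it is generic if $\pi_\parallel|_{\mathcal{L}}$ and $\pi_\perp|_{\mathcal{L}}$ are injective and $\pi_\perp(\mathcal{L})$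 is dense in $\mathbb{R}^{s-n}$. $A$ is a self-similarity of it if $A\pi_\parallel(\mathcal{L})\subset\pi_\parallel(\mathcal{L})$ and there exist $C\in\mathbb{Z}^{s\times s}$, $B$ real with $\begin{pmatrix}A&O\\O&B\end{pmatrix}L=LC$. *)

theory Defs
  imports "Jordan_Normal_Form.Matrix" "Jordan_Normal_Form.Char_Poly"
    "HOL-Computational_Algebra.Polynomial" Complex_Main
begin

definition mat_poly_eval :: "'a :: comm_ring_1 poly \<Rightarrow> 'a mat \<Rightarrow> 'a mat" where
  "mat_poly_eval p T =
     foldr (\<lambda>c M. c \<cdot>\<^sub>m 1\<^sub>m (dim_row T) + T * M) (coeffs p) (0\<^sub>m (dim_row T) (dim_row T))"

definition is_min_poly :: "'a :: field mat \<Rightarrow> 'a poly \<Rightarrow> bool" where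
  "is_min_poly T p \<longleftrightarrow>
     lead_coeff p = 1 \<and> mat_poly_eval p T = 0\<^sub>m (dim_row T) (dim_row T) \<and>
     (\<forall>q. lead_coeff q = 1 \<and> mat_poly_eval q T = 0\<^sub>m (dim_row T) (dim_row T)
            \<longrightarrow> degree p \<le> degree q)"

definition is_min_poly_Q :: "'a :: field_char_0 mat \<Rightarrow> rat poly \<Rightarrow> bool" where
  "is_min_poly_Q T p \<longleftrightarrow>
     lead_coeff p = 1 \<and> mat_poly_eval (map_poly of_rat p) T = 0\<^sub>m (dim_row T) (dim_row T) \<and>
     (\<forall>q :: rat poly. lead_coeff q = 1 \<and>
            mat_poly_eval (map_poly of_rat q) T = 0\<^sub>m (dim_row T) (dim_row T)
            \<longrightarrow> degree p \<le> degree q)"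

definition diagonalizable_C :: "real mat \<Rightarrow> bool" where
  "diagonalizable_C T \<longleftrightarrow> (\<exists>D. diagonal_mat D \<and> similar_mat (map_mat complex_of_real T) D)"

definition lattice :: "nat \<Rightarrow> real mat \<Rightarrow> real vec set" where
  "lattice s L = {L *\<^sub>v map_vec real_of_int z | z. z \<in> carrier_vec s}"

definition proj_par :: "nat \<Rightarrow> real vec \<Rightarrow> real vec" where
  "proj_par n x = vec n (\<lambda>i. x $ i)"

definition proj_perp :: "nat \<Rightarrow> nat \<Rightarrow> real vec \<Rightarrow> real vec" where
  "proj_perp n s x = vec (s - n) (\<lambda>i. x $ (n + i))"

text \<open>Generic cut-and-project scheme (L in R^s, R^n) with matrix L.
  Density of pi_perp(L) in R^(s-n) is written out with the (equivalent) sup-norm.\<close>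
definition generic_cps :: "nat \<Rightarrow> nat \<Rightarrow> real mat \<Rightarrow> bool" where
  "generic_cps n s L \<longleftrightarrow>
     1 \<le> n \<and> n < s \<and> L \<in> carrier_mat s s \<and> invertible_mat L \<and>
     inj_on (proj_par n) (lattice s L) \<and>
     inj_on (proj_perp n s) (lattice s L) \<and>
     (\<forall>y \<in> carrier_vec (s - n). \<forall>\<epsilon> > 0. \<exists>x \<in> lattice s L.
        \<forall>i < s - n. \<bar>proj_perp n s x $ i - y $ i\<bar> < \<epsilon>)"

definition self_similarity :: "nat \<Rightarrow> nat \<Rightarrow> real mat \<Rightarrow> real mat \<Rightarrow> bool" where
  "self_similarity n s L A \<longleftrightarrow>
     A \<in> carrier_mat n n \<and>
     (\<forall>x \<in> lattice s L. A *\<^sub>v proj_par n x \<in> proj_par n ` lattice s L) \<and>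
     (\<exists>(C :: int mat) (B :: real mat). C \<in> carrier_mat s s \<and> B \<in> carrier_mat (s - n) (s - n) \<and>
        four_block_mat A (0\<^sub>m n (s - n)) (0\<^sub>m (s - n) n) B * L = L * map_mat real_of_int C)"

end

theory Submission
  imports Defs "Jordan_Normal_Form.Jordan_Normal_Form_Existence"
    "HOL-Computational_Algebra.Field_as_Ring"
begin

text \<open>Write M for the block matrix diag(A, B), so that M L = L C. For a rational polynomial q
  this gives q(M) L = L q(C) and hence, L being invertible, q(C) = 0 iff q(A) = 0 and q(B) = 0.
  Conversely, if q(A) = 0 then the first n rows of q(M) L = L q(C) vanish. Clearing denominators
  in a column of the rational matrix q(C) gives an integer vector z whose lattice point L z has
  parallel part 0, so L z = 0 by injectivity of the parallel projection on the lattice; thus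
  q(C) = 0. The perpendicular projection does the same for B. Hence A, B and C have the same
  rational annihilators and the same rational minimal polynomial p, which is also the complex
  minimal polynomial of the integer matrix C, since extending scalars creates no linear
  dependence among rational matrices. Finally, invertibility amounts to p(0) \<noteq> 0 and, via
  Jordan normal forms, diagonalizability over the complex numbers to gcd(p, p') = 1.\<close>

section \<open>Evaluating polynomials at square matrices\<close>

lemma zero_smult_mat [simp]: "(0 :: 'a :: semiring_0) \<cdot>\<^sub>m A = 0\<^sub>m (dim_row A) (dim_col A)"
  by (rule eq_matI) auto

lemma one_smult_mat [simp]: "(1 :: 'a :: semiring_1) \<cdot>\<^sub>m A = A"
  by (rule eq_matI) auto

lemma invertible_matE:
  assumes "invertible_mat L" and "L \<in> carrier_mat n n"
  obtains L' where "L' \<in> carrier_mat n n" "L * L' = 1\<^sub>m n" "L' * L = 1\<^sub>m n"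
proof -
  from assms obtain L' where "L * L' = 1\<^sub>m n" "L' * L = 1\<^sub>m (dim_row L')"
    unfolding invertible_mat_def inverts_mat_def by auto
  moreover from this assms(2) have "L' \<in> carrier_mat n n"
    by (metis carrier_matD carrier_matI index_mult_mat(2,3) index_one_mat(2,3))
  ultimately show thesis using that by auto
qed

lemma four_block_diag_eq_0_iff:
  assumes "X \<in> carrier_mat n1 n1" and "Y \<in> carrier_mat n2 n2"
  shows "four_block_mat X (0\<^sub>m n1 n2) (0\<^sub>m n2 n1) Y = 0\<^sub>m (n1 + n2) (n1 + n2) \<longleftrightarrow>
    X = 0\<^sub>m n1 n1 \<and> Y = 0\<^sub>m n2 n2"
proof
  assume z: "four_block_mat X (0\<^sub>m n1 n2) (0\<^sub>m n2 n1) Y = 0\<^sub>m (n1 + n2) (n1 + n2)"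
  have "X $$ (i, j) = 0" if "i < n1" "j < n1" for i j
    using arg_cong[OF z, of "\<lambda>M. M $$ (i, j)"] that assms by simp
  moreover have "Y $$ (i, j) = 0" if "i < n2" "j < n2" for i j
    using arg_cong[OF z, of "\<lambda>M. M $$ (n1 + i, n1 + j)"] that assms by simp
  ultimately show "X = 0\<^sub>m n1 n1 \<and> Y = 0\<^sub>m n2 n2"
    using assms by (auto intro!: eq_matI)
qed (use assms in simp)

lemma mat_poly_eval_carrier [simp]:
  "mat_poly_eval p T \<in> carrier_mat (dim_row T) (dim_row T)"
proof -
  have "foldr (\<lambda>c M. c \<cdot>\<^sub>m 1\<^sub>m (dim_row T) + T * M) cs (0\<^sub>m (dim_row T) (dim_row T))
      \<in> carrier_mat (dim_row T) (dim_row T)" for cs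
    by (induct cs) auto
  then show ?thesis
    unfolding mat_poly_eval_def .
qed

lemma dim_mat_poly_eval [simp]:
  "dim_row (mat_poly_eval p T) = dim_row T" "dim_col (mat_poly_eval p T) = dim_row T"
  by (rule carrier_matD[OF mat_poly_eval_carrier])+

lemma mat_poly_eval_carrier_mat:
  "T \<in> carrier_mat m m \<Longrightarrow> mat_poly_eval p T \<in> carrier_mat m m"
  using mat_poly_eval_carrier[of p T] by auto

lemma mat_poly_eval_0 [simp]: "mat_poly_eval 0 T = 0\<^sub>m (dim_row T) (dim_row T)"
  unfolding mat_poly_eval_def by simp

lemma mat_poly_eval_pCons:
  assumes "T \<in> carrier_mat m m"
  shows "mat_poly_eval (pCons a p) T = a \<cdot>\<^sub>m 1\<^sub>m m + T * mat_poly_eval p T"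
proof (cases "p = 0 \<and> a = 0")
  case True
  then show ?thesis using assms by auto
next
  case False
  then have "coeffs (pCons a p) = a # coeffs p" by (auto simp: cCons_def)
  then show ?thesis using assms unfolding mat_poly_eval_def by auto
qed

lemma mat_poly_eval_const:
  assumes "T \<in> carrier_mat m m"
  shows "mat_poly_eval [:a:] T = a \<cdot>\<^sub>m 1\<^sub>m m"
  using mat_poly_eval_pCons[OF assms, of a 0] assms by auto

lemma mat_poly_eval_add:
  assumes T: "T \<in> carrier_mat m m"
  shows "mat_poly_eval (p + q) T = mat_poly_eval p T + mat_poly_eval q T"
proof (induct p q rule: poly_induct2)
  case 0
  then show ?case using T by auto
next
  case (pCons a p b q)
  let ?P = "mat_poly_eval p T" and ?Q = "mat_poly_eval q T"
  have "T * (?P + ?Q) = T * ?P + T * ?Q"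
    using T by (simp add: mult_add_distrib_mat[of _ m m _ m] mat_poly_eval_carrier_mat)
  then have "(a + b) \<cdot>\<^sub>m 1\<^sub>m m + T * (?P + ?Q) = (a \<cdot>\<^sub>m 1\<^sub>m m + T * ?P) + (b \<cdot>\<^sub>m 1\<^sub>m m + T * ?Q)"
    using T by (intro eq_matI) (auto simp: algebra_simps)
  then show ?case
    using pCons by (simp add: mat_poly_eval_pCons[OF T])
qed

lemma mat_poly_eval_smult:
  assumes T: "T \<in> carrier_mat m m"
  shows "mat_poly_eval (Polynomial.smult c p) T = c \<cdot>\<^sub>m mat_poly_eval p T"
proof (induct p)
  case 0
  then show ?case using T by auto
next
  case (pCons a p)
  have "c \<cdot>\<^sub>m (a \<cdot>\<^sub>m 1\<^sub>m m) = (c * a) \<cdot>\<^sub>m 1\<^sub>m m" by (rule eq_matI) auto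
  then show ?case
    using T pCons by (simp add: mat_poly_eval_pCons[OF T] add_smult_distrib_left_mat[of _ m m]
        mult_smult_distrib[of _ m m _ m] mat_poly_eval_carrier_mat)
qed

lemma mat_poly_eval_mult:
  assumes T: "T \<in> carrier_mat m m"
  shows "mat_poly_eval (p * q) T = mat_poly_eval p T * mat_poly_eval q T"
proof (induct p)
  case 0
  then show ?case using T by (simp add: left_mult_zero_mat[of _ m m])
next
  case (pCons a p)
  let ?P = "mat_poly_eval p T" and ?Q = "mat_poly_eval q T"
  have P: "?P \<in> carrier_mat m m" and Q: "?Q \<in> carrier_mat m m"
    using T by (auto simp: mat_poly_eval_carrier_mat)
  have "pCons a p * q = Polynomial.smult a q + pCons 0 (p * q)" by simp
  then have "mat_poly_eval (pCons a p * q) T = a \<cdot>\<^sub>m ?Q + T * (?P * ?Q)"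
    using T P Q pCons by (simp add: mat_poly_eval_add mat_poly_eval_smult mat_poly_eval_pCons)
  also have "\<dots> = (a \<cdot>\<^sub>m 1\<^sub>m m + T * ?P) * ?Q"
    using T P Q by (simp add: add_mult_distrib_mat[of _ m m] mult_smult_assoc_mat[of _ m m _ m])
  finally show ?case by (simp add: mat_poly_eval_pCons[OF T])
qed

lemma mat_poly_eval_power:
  assumes T: "T \<in> carrier_mat m m"
  shows "mat_poly_eval (p ^ k) T = mat_poly_eval p T ^\<^sub>m k"
proof (induct k)
  case 0
  show ?case
    using mat_poly_eval_const[OF T, of 1] T by (simp add: one_pCons)
next
  case (Suc k)
  then show ?case
    unfolding power_Suc2 mat_poly_eval_mult[OF T] by simp
qed

lemma mat_poly_eval_intertwine:
  assumes X: "X \<in> carrier_mat m m" and Y: "Y \<in> carrier_mat k k"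
    and L: "L \<in> carrier_mat m k" and XL: "X * L = L * Y"
  shows "mat_poly_eval p X * L = L * mat_poly_eval p Y"
proof (induct p)
  case 0
  then show ?case using X Y L by simp
next
  case (pCons a p)
  let ?P = "mat_poly_eval p X" and ?Q = "mat_poly_eval p Y"
  have P: "?P \<in> carrier_mat m m" and Q: "?Q \<in> carrier_mat k k"
    using X Y by (auto simp: mat_poly_eval_carrier_mat)
  have "(a \<cdot>\<^sub>m 1\<^sub>m m + X * ?P) * L = a \<cdot>\<^sub>m L + X * (?P * L)"
    using X P L by (simp add: add_mult_distrib_mat[of _ m m] mult_smult_assoc_mat[of _ m m _ k]
        assoc_mult_mat[of X m m ?P m L k])
  also have "\<dots> = a \<cdot>\<^sub>m L + (X * L) * ?Q"
    using pCons X L Q by simp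
  also have "\<dots> = L * (a \<cdot>\<^sub>m 1\<^sub>m k) + L * (Y * ?Q)"
    unfolding XL using L Y Q by (simp add: mult_smult_distrib[of _ m k _ k])
  also have "\<dots> = L * (a \<cdot>\<^sub>m 1\<^sub>m k + Y * ?Q)"
    using L Y Q by (simp add: mult_add_distrib_mat[of _ m k _ k])
  finally show ?case
    unfolding mat_poly_eval_pCons[OF X] mat_poly_eval_pCons[OF Y] .
qed

lemma mat_poly_eval_similar_mat_wit:
  assumes "similar_mat_wit X J P Q"
  shows "mat_poly_eval f X = P * mat_poly_eval f J * Q"
proof -
  from similar_mat_witD[OF refl assms] obtain n where
    X: "X \<in> carrier_mat n n" and J: "J \<in> carrier_mat n n" and P: "P \<in> carrier_mat n n"
    and Q: "Q \<in> carrier_mat n n" and PQ: "P * Q = 1\<^sub>m n" and QP: "Q * P = 1\<^sub>m n"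
    and XJ: "X = P * J * Q" by blast
  have "X * P = P * J"
    unfolding XJ using J P Q QP by (simp add: assoc_mult_mat[of _ n n _ n _ n])
  then have "mat_poly_eval f X * P * Q = P * mat_poly_eval f J * Q"
    using mat_poly_eval_intertwine[OF X J P] by simp
  also have "mat_poly_eval f X * P * Q = mat_poly_eval f X"
    using X P Q PQ by (simp add: assoc_mult_mat[of _ n n _ n _ n] mat_poly_eval_carrier_mat)
  finally show ?thesis .
qed

lemma (in comm_ring_hom) mat_poly_eval_hom:
  assumes T: "T \<in> carrier_mat m m"
  shows "map_mat hom (mat_poly_eval p T) = mat_poly_eval (map_poly hom p) (map_mat hom T)"
proof (induct p)
  case 0
  then show ?case using T by auto
next
  case (pCons a p)
  have "map_mat hom (a \<cdot>\<^sub>m 1\<^sub>m m + T * mat_poly_eval p T) =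
     hom a \<cdot>\<^sub>m 1\<^sub>m m + map_mat hom T * map_mat hom (mat_poly_eval p T)"
    using T by (auto simp: mat_hom_mult[of _ m m _ m, symmetric] mat_poly_eval_carrier_mat
        intro!: eq_matI simp: hom_distribs)
  then show ?case
    using T pCons by (simp add: mat_poly_eval_pCons)
qed

lemma (in inj_comm_ring_hom) mat_poly_eval_hom_eq_0_iff:
  assumes T: "T \<in> carrier_mat m m"
  shows "mat_poly_eval (map_poly hom p) (map_mat hom T) = 0\<^sub>m m m \<longleftrightarrow> mat_poly_eval p T = 0\<^sub>m m m"
proof -
  have "map_mat hom (0\<^sub>m m m) = 0\<^sub>m m m" by (rule eq_matI) auto
  then show ?thesis
    unfolding mat_poly_eval_hom[OF T, symmetric] by (metis mat_hom_inj)
qed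

lemma mat_poly_eval_four_block_diag:
  assumes A: "A \<in> carrier_mat n1 n1" and B: "B \<in> carrier_mat n2 n2"
  shows "mat_poly_eval p (four_block_mat A (0\<^sub>m n1 n2) (0\<^sub>m n2 n1) B) =
     four_block_mat (mat_poly_eval p A) (0\<^sub>m n1 n2) (0\<^sub>m n2 n1) (mat_poly_eval p B)"
proof (induct p)
  case 0
  then show ?case using A B by simp
next
  case (pCons a p)
  let ?M = "four_block_mat A (0\<^sub>m n1 n2) (0\<^sub>m n2 n1) B"
  let ?P = "mat_poly_eval p A" and ?Q = "mat_poly_eval p B"
  have P: "?P \<in> carrier_mat n1 n1" and Q: "?Q \<in> carrier_mat n2 n2"
    using A B by (auto simp: mat_poly_eval_carrier_mat)
  have "?M * four_block_mat ?P (0\<^sub>m n1 n2) (0\<^sub>m n2 n1) ?Q =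
     four_block_mat (A * ?P) (0\<^sub>m n1 n2) (0\<^sub>m n2 n1) (B * ?Q)"
    by (subst mult_four_block_mat[of _ n1 n1 _ n2 _ n2 _ _ n1 _ n2]) (use A B P Q in auto)
  moreover have "a \<cdot>\<^sub>m 1\<^sub>m (n1 + n2) =
      four_block_mat (a \<cdot>\<^sub>m 1\<^sub>m n1) (0\<^sub>m n1 n2) (0\<^sub>m n2 n1) (a \<cdot>\<^sub>m 1\<^sub>m n2)"
    by (subst four_block_one_mat[symmetric], subst smult_four_block_mat[of _ n1 n1 _ n2 _ n2]) auto
  ultimately show ?case
    using A B P Q pCons
    by (simp add: mat_poly_eval_pCons[of _ "n1 + n2"] mat_poly_eval_pCons[of _ n1]
        mat_poly_eval_pCons[of _ n2] add_four_block_mat[of _ n1 n1 _ n2 _ n2])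
qed

section \<open>Diagonal and Jordan matrices\<close>

lemma mat_poly_eval_upper_triangular:
  assumes T: "T \<in> carrier_mat m m" and ut: "upper_triangular T"
  shows "upper_triangular (mat_poly_eval p T) \<and> (\<forall>i<m. mat_poly_eval p T $$ (i, i) = poly p (T $$ (i, i)))"
proof (induct p)
  case 0
  then show ?case using T by (simp add: upper_triangular_def)
next
  case (pCons a p)
  let ?P = "mat_poly_eval p T"
  have P: "?P \<in> carrier_mat m m" using T by (simp add: mat_poly_eval_carrier_mat)
  have utP: "?P $$ (i, j) = 0" if "i < m" "j < i" for i j
    using pCons P that by (auto simp: upper_triangular_def)
  have utT: "T $$ (i, j) = 0" if "i < m" "j < i" for i j
    using ut T that by (auto simp: upper_triangular_def)
  have prod: "(T * ?P) $$ (i, j) = (\<Sum>k<m. T $$ (i, k) * ?P $$ (k, j))" if "i < m" "j < m" for i j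
    using that T P by (simp add: scalar_prod_def lessThan_atLeast0)
  have below: "(T * ?P) $$ (i, j) = 0" if "i < m" "j < i" for i j
  proof -
    have "(T * ?P) $$ (i, j) = (\<Sum>k<m. 0)"
      unfolding prod[OF that(1) order.strict_trans[OF that(2) that(1)]]
      by (rule sum.cong) (use that utP utT in \<open>auto, metis linorder_not_le mult_not_zero le_less_trans\<close>)
    then show ?thesis by simp
  qed
  have diag: "(T * ?P) $$ (i, i) = T $$ (i, i) * ?P $$ (i, i)" if "i < m" for i
  proof -
    have "(T * ?P) $$ (i, i) = (\<Sum>k<m. if k = i then T $$ (i, i) * ?P $$ (i, i) else 0)"
      unfolding prod[OF that that]
      by (rule sum.cong) (use that utP utT in \<open>auto, metis linorder_neqE_nat mult_not_zero\<close>)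
    then show ?thesis using that by simp
  qed
  show ?case
    unfolding mat_poly_eval_pCons[OF T] using T P below diag pCons by (auto simp: upper_triangular_def)
qed

lemma mat_poly_eval_diagonal:
  assumes T: "T \<in> carrier_mat m m" and dg: "diagonal_mat T"
  shows "diagonal_mat (mat_poly_eval p T) \<and> (\<forall>i<m. mat_poly_eval p T $$ (i, i) = poly p (T $$ (i, i)))"
proof (induct p)
  case 0
  then show ?case using T by (simp add: diagonal_mat_def)
next
  case (pCons a p)
  let ?P = "mat_poly_eval p T"
  have P: "?P \<in> carrier_mat m m" using T by (simp add: mat_poly_eval_carrier_mat)
  have dP: "?P $$ (i, j) = 0" if "i < m" "j < m" "i \<noteq> j" for i j
    using pCons P that by (auto simp: diagonal_mat_def)
  have dT: "T $$ (i, j) = 0" if "i < m" "j < m" "i \<noteq> j" for i j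
    using dg T that by (auto simp: diagonal_mat_def)
  have prod: "(T * ?P) $$ (i, j) = T $$ (i, i) * ?P $$ (i, j)" if "i < m" "j < m" for i j
  proof -
    have "(T * ?P) $$ (i, j) = (\<Sum>k<m. T $$ (i, k) * ?P $$ (k, j))"
      using that T P by (simp add: scalar_prod_def lessThan_atLeast0)
    also have "\<dots> = (\<Sum>k<m. if k = i then T $$ (i, i) * ?P $$ (i, j) else 0)"
      by (rule sum.cong) (use that dT in auto)
    finally show ?thesis using that by simp
  qed
  show ?case
    unfolding mat_poly_eval_pCons[OF T] using T P prod dP pCons by (auto simp: diagonal_mat_def)
qed

lemma mat_poly_eval_diagonal_eq_0:
  assumes T: "T \<in> carrier_mat m m" and dg: "diagonal_mat T"
    and roots: "\<And>i. i < m \<Longrightarrow> poly p (T $$ (i, i)) = 0"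
  shows "mat_poly_eval p T = 0\<^sub>m m m"
  using mat_poly_eval_diagonal[OF T dg, of p] roots T
  by (intro eq_matI) (auto simp: diagonal_mat_def mat_poly_eval_carrier_mat)

lemma similar_diagonal_annihilator_roots:
  assumes X: "X \<in> carrier_mat m m" and sim: "similar_mat X D" and dg: "diagonal_mat D"
    and f: "mat_poly_eval f X = 0\<^sub>m m m"
    and roots: "\<And>a. poly f a = 0 \<Longrightarrow> poly g a = 0"
  shows "mat_poly_eval g X = 0\<^sub>m m m"
proof -
  from sim obtain P Q where wit: "similar_mat_wit X D P Q"
    unfolding similar_mat_def by blast
  note c = similar_mat_witD2[OF X wit]
  have "mat_poly_eval f D = Q * mat_poly_eval f X * P"
    by (rule mat_poly_eval_similar_mat_wit[OF similar_mat_wit_sym[OF wit]])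
  then have fD: "mat_poly_eval f D = 0\<^sub>m m m"
    using f c by simp
  have "mat_poly_eval g D = 0\<^sub>m m m"
  proof (rule mat_poly_eval_diagonal_eq_0[OF c(5) dg])
    fix i assume "i < m"
    then show "poly g (D $$ (i, i)) = 0"
      using mat_poly_eval_diagonal[OF c(5) dg, of f] fD roots by auto
  qed
  then show ?thesis
    using mat_poly_eval_similar_mat_wit[OF wit, of g] c by simp
qed

lemma mat_poly_eval_jordan_block_linear:
  "mat_poly_eval [:-a, 1:] (jordan_block n (a :: 'a :: comm_ring_1)) = jordan_block n 0"
  by (rule eq_matI) (auto simp: mat_poly_eval_pCons[OF jordan_block_carrier]
      mat_poly_eval_const[OF jordan_block_carrier])

lemma mat_poly_eval_jordan_block_char_poly:
  "mat_poly_eval ([:-a, 1:] ^ n) (jordan_block n (a :: 'a :: field)) = 0\<^sub>m n n"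
  unfolding mat_poly_eval_power[OF jordan_block_carrier] mat_poly_eval_jordan_block_linear
    jordan_block_zero_pow
  by (rule eq_matI) auto

lemma mat_poly_eval_jordan_matrix_eq_0:
  fixes f :: "'a :: field poly"
  assumes "(\<Prod>(n, a)\<leftarrow>n_as. [:-a, 1:] ^ n) dvd f"
  shows "mat_poly_eval f (jordan_matrix n_as) = 0\<^sub>m (sum_list (map fst n_as)) (sum_list (map fst n_as))"
  using assms
proof (induct n_as arbitrary: f)
  case Nil
  show ?case
    using mat_poly_eval_carrier[of f "jordan_matrix []"] by (intro eq_matI) auto
next
  case (Cons na n_as)
  obtain n a where na: "na = (n, a)" by force
  let ?N = "sum_list (map fst n_as)"
  have "[:-a, 1:] ^ n dvd f" and rest: "(\<Prod>(n, a)\<leftarrow>n_as. [:-a, 1:] ^ n) dvd f"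
    using Cons(2) unfolding na by (auto intro: dvd_mult_left dvd_mult_right)
  then obtain g where f: "f = [:-a, 1:] ^ n * g" by (elim dvdE)
  have "mat_poly_eval f (jordan_block n a) = 0\<^sub>m n n"
    unfolding f mat_poly_eval_mult[OF jordan_block_carrier] mat_poly_eval_jordan_block_char_poly
    by (simp add: mat_poly_eval_carrier_mat)
  then show ?case
    unfolding na jordan_matrix_Cons mat_poly_eval_four_block_diag[OF jordan_block_carrier jordan_matrix_carrier]
    using Cons(1)[OF rest] by simp
qed

lemma cayley_hamilton_complex:
  assumes X: "(X :: complex mat) \<in> carrier_mat n n"
  shows "mat_poly_eval (char_poly X) X = 0\<^sub>m n n"
proof -
  from char_poly_factorized[OF X] obtain as where "char_poly X = (\<Prod>a\<leftarrow>as. [:-a, 1:])" by auto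
  from jordan_nf_exists[OF X this] obtain n_as where jnf: "jordan_nf X n_as" ..
  then obtain P Q where wit: "similar_mat_wit X (jordan_matrix n_as) P Q"
    unfolding jordan_nf_def similar_mat_def by blast
  note c = similar_mat_witD2(5-7)[OF X wit]
  have N: "sum_list (map fst n_as) = n"
    using c(1) by (metis carrier_matD(1) jordan_matrix_dim(1))
  have "mat_poly_eval (char_poly X) (jordan_matrix n_as) = 0\<^sub>m n n"
    using mat_poly_eval_jordan_matrix_eq_0[of n_as "char_poly X"] jordan_nf_char_poly[OF jnf]
    unfolding N by simp
  then show ?thesis
    unfolding mat_poly_eval_similar_mat_wit[OF wit] using c by simp
qed

text \<open>Writing f = (X - a) g, the (0, 1) entry of f(J) = N g(J), with N the nilpotent shift,
  is the diagonal entry g(a) of g(J).\<close>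
lemma jordan_block_annihilator_double_root:
  assumes k: "k \<ge> 2" and z: "mat_poly_eval f (jordan_block k (a :: 'a :: field)) = 0\<^sub>m k k"
  shows "[:-a, 1:] ^ 2 dvd f"
proof -
  have J: "jordan_block k a \<in> carrier_mat k k" by simp
  have ut: "upper_triangular (jordan_block k a)" unfolding upper_triangular_def by auto
  note U = mat_poly_eval_upper_triangular[OF J ut]
  have "poly f a = 0" using U[of f] z k by force
  then obtain g where f: "f = [:-a, 1:] * g" unfolding poly_eq_0_iff_dvd by (elim dvdE)
  let ?G = "mat_poly_eval g (jordan_block k a)"
  have G: "?G \<in> carrier_mat k k" using J by (rule mat_poly_eval_carrier_mat)
  have "0 = (jordan_block k 0 * ?G) $$ (0, 1)"
    using z k unfolding f mat_poly_eval_mult[OF J] mat_poly_eval_jordan_block_linear by simp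
  also have "\<dots> = (\<Sum>j<k. jordan_block k 0 $$ (0, j) * ?G $$ (j, 1))"
    using G k by (simp add: scalar_prod_def lessThan_atLeast0)
  also have "\<dots> = (\<Sum>j<k. if j = 1 then ?G $$ (1, 1) else 0)"
    by (rule sum.cong) (use k in auto)
  also have "\<dots> = poly g a" using U[of g] k by auto
  finally have "poly g a = 0" ..
  then obtain h where g: "g = [:-a, 1:] * h" unfolding poly_eq_0_iff_dvd by (elim dvdE)
  show ?thesis unfolding f g power2_eq_square mult.assoc[symmetric] by (rule dvd_triv_left)
qed

lemma jordan_matrix_blocks_le_1:
  fixes f :: "'a :: field poly"
  assumes "mat_poly_eval f (jordan_matrix n_as) = 0\<^sub>m (sum_list (map fst n_as)) (sum_list (map fst n_as))"
    and no_double_root: "\<And>a. \<not> [:-a, 1:] ^ 2 dvd f"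
  shows "\<forall>(k, a) \<in> set n_as. k \<le> 1"
  using assms(1)
proof (induct n_as)
  case Nil
  then show ?case by simp
next
  case (Cons na n_as)
  obtain n a where na: "na = (n, a)" by force
  have "mat_poly_eval f (jordan_block n a) = 0\<^sub>m n n \<and>
      mat_poly_eval f (jordan_matrix n_as) = 0\<^sub>m (sum_list (map fst n_as)) (sum_list (map fst n_as))"
    using Cons(2) unfolding na jordan_matrix_Cons
      mat_poly_eval_four_block_diag[OF jordan_block_carrier jordan_matrix_carrier]
    by (simp add: four_block_diag_eq_0_iff mat_poly_eval_carrier_mat)
  moreover have "n \<le> 1"
    using jordan_block_annihilator_double_root[of n f a] no_double_root[of a] calculation
    by (cases "n \<le> 1") auto
  ultimately show ?case using Cons(1) unfolding na by auto
qed

lemma jordan_matrix_diagonal: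
  assumes "\<forall>(k, a) \<in> set n_as. k \<le> 1"
  shows "diagonal_mat (jordan_matrix n_as)"
  using assms
proof (induct n_as)
  case Nil
  then show ?case by (simp add: diagonal_mat_def jordan_matrix_def)
next
  case (Cons na n_as)
  obtain n a where na: "na = (n, a)" by force
  have "n \<le> 1" and IH: "diagonal_mat (jordan_matrix n_as)"
    using Cons unfolding na by auto
  then show ?case
    unfolding na jordan_matrix_Cons diagonal_mat_def by auto
qed

section \<open>Rational minimal polynomials\<close>

lemma is_min_poly_Q_cong:
  assumes "\<And>q. mat_poly_eval (map_poly of_rat q) S = 0\<^sub>m (dim_row S) (dim_row S) \<longleftrightarrow>
      mat_poly_eval (map_poly of_rat q) T = 0\<^sub>m (dim_row T) (dim_row T)"
  shows "is_min_poly_Q S p \<longleftrightarrow> is_min_poly_Q T p"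
  using assms unfolding is_min_poly_Q_def by simp

lemma is_min_poly_Q_degree_le:
  assumes T: "T \<in> carrier_mat m m" and min: "is_min_poly_Q T p"
    and q: "q \<noteq> 0" "mat_poly_eval (map_poly of_rat q) T = 0\<^sub>m m m"
  shows "degree p \<le> degree q"
proof -
  define q' where "q' = Polynomial.smult (inverse (lead_coeff q)) q"
  have "lead_coeff q' = 1" and "degree q' = degree q"
    unfolding q'_def using q by auto
  moreover have "mat_poly_eval (map_poly of_rat q') T = 0\<^sub>m m m"
    unfolding q'_def of_rat_hom.map_poly_hom_smult mat_poly_eval_smult[OF T] q by simp
  ultimately show ?thesis
    using min T unfolding is_min_poly_Q_def by fastforce
qed

lemma is_min_poly_Q_exists:
  fixes R :: "rat mat"
  assumes R: "R \<in> carrier_mat s s"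
  shows "\<exists>p. is_min_poly_Q (map_mat of_rat R :: 'a :: field_char_0 mat) p"
proof -
  let ?R = "map_mat of_rat R :: 'a mat" and ?chi = "char_poly R"
  have "mat_poly_eval (char_poly (map_mat of_rat R)) (map_mat of_rat R :: complex mat) = 0\<^sub>m s s"
    using R by (intro cayley_hamilton_complex) simp
  then have "mat_poly_eval ?chi R = 0\<^sub>m s s"
    unfolding of_rat_hom.char_poly_hom[OF R] of_rat_hom.mat_poly_eval_hom_eq_0_iff[OF R] .
  then have "lead_coeff ?chi = 1 \<and> mat_poly_eval (map_poly of_rat ?chi) ?R = 0\<^sub>m s s"
    using R degree_monic_char_poly[OF R] by (simp add: of_rat_hom.mat_poly_eval_hom_eq_0_iff)
  from ex_has_least_nat[where P = "\<lambda>q. lead_coeff q = 1 \<and>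
      mat_poly_eval (map_poly of_rat q) ?R = 0\<^sub>m s s", OF this, of degree]
  show ?thesis
    unfolding is_min_poly_Q_def using R by auto
qed

lemma invertible_mat_iff_min_poly_Q_coeff_0:
  fixes T :: "'a :: field_char_0 mat"
  assumes T: "T \<in> carrier_mat m m" and min: "is_min_poly_Q T p"
  shows "invertible_mat T \<longleftrightarrow> coeff p 0 \<noteq> 0"
proof -
  have lp: "lead_coeff p = 1" and ann: "mat_poly_eval (map_poly of_rat p) T = 0\<^sub>m m m"
    using min T unfolding is_min_poly_Q_def by auto
  obtain c q where pq: "p = pCons c q" by (cases p)
  let ?Q = "mat_poly_eval (map_poly of_rat q) T"
  have Q: "?Q \<in> carrier_mat m m" using T by (rule mat_poly_eval_carrier_mat)
  have E: "of_rat c \<cdot>\<^sub>m 1\<^sub>m m + T * ?Q = 0\<^sub>m m m"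
    using ann unfolding pq of_rat_hom.map_poly_pCons_hom mat_poly_eval_pCons[OF T] .
  have TQ: "T * ?Q = (- of_rat c) \<cdot>\<^sub>m 1\<^sub>m m"
  proof (rule eq_matI)
    fix i j assume "i < dim_row ((- of_rat c) \<cdot>\<^sub>m 1\<^sub>m m :: 'a mat)"
      "j < dim_col ((- of_rat c) \<cdot>\<^sub>m 1\<^sub>m m :: 'a mat)"
    then have ij: "i < m" "j < m" by auto
    have "(of_rat c \<cdot>\<^sub>m 1\<^sub>m m + T * ?Q) $$ (i, j) = 0"
      unfolding E using ij by simp
    then show "(T * ?Q) $$ (i, j) = ((- of_rat c) \<cdot>\<^sub>m 1\<^sub>m m) $$ (i, j)"
      using ij T Q by (simp add: add_eq_0_iff)
  qed (use T Q in auto)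
  show ?thesis
  proof
    assume "invertible_mat T"
    then obtain T' where T': "T' \<in> carrier_mat m m" "T' * T = 1\<^sub>m m"
      using T by (elim invertible_matE)
    show "coeff p 0 \<noteq> 0"
    proof
      assume "coeff p 0 = 0"
      then have c: "c = 0" and q: "q \<noteq> 0"
        using lp pq by auto
      have "?Q = (T' * T) * ?Q"
        unfolding T'(2) using Q by (rule left_mult_one_mat[symmetric])
      also have "\<dots> = T' * (T * ?Q)"
        by (rule assoc_mult_mat[OF T'(1) T Q])
      also have "\<dots> = 0\<^sub>m m m"
        unfolding TQ c using T'(1) by simp
      finally have "?Q = 0\<^sub>m m m" .
      then have "degree p \<le> degree q"
        by (rule is_min_poly_Q_degree_le[OF T min q])
      then show False
        using pq q by simp
    qed
  next
    assume "coeff p 0 \<noteq> 0"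
    then have c: "c \<noteq> 0" using pq by simp
    let ?T' = "(- inverse (of_rat c)) \<cdot>\<^sub>m ?Q"
    have T': "?T' \<in> carrier_mat m m" using Q by simp
    have TT': "T * ?T' = 1\<^sub>m m"
      unfolding mult_smult_distrib[OF T Q] TQ using c by (intro eq_matI) simp_all
    moreover have "?T' * T = 1\<^sub>m m"
      by (rule mat_mult_left_right_inverse[OF T T' TT'])
    ultimately show "invertible_mat T"
      unfolding invertible_mat_def inverts_mat_def using T T' by (intro conjI exI[of _ ?T']) auto
  qed
qed

lemma mat_poly_eval_index_monom_sum:
  assumes T: "T \<in> carrier_mat m m" and K: "degree q < K" and ij: "i < m" "j < m"
  shows "mat_poly_eval q T $$ (i, j) = (\<Sum>k<K. coeff q k * mat_poly_eval (monom 1 k) T $$ (i, j))"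
proof -
  have sum: "mat_poly_eval (\<Sum>k\<in>S. f k) T $$ (i, j) = (\<Sum>k\<in>S. mat_poly_eval (f k) T $$ (i, j))"
    if "finite S" for S and f :: "nat \<Rightarrow> 'a poly"
    using that by (induct S rule: finite_induct) (use T ij in \<open>simp_all add: mat_poly_eval_add\<close>)
  have "(\<Sum>k<K. Polynomial.smult (coeff q k) (monom 1 k)) = q"
    using K by (intro poly_eqI) (auto simp: coeff_sum coeff_eq_0 smult_monom)
  then show ?thesis
    using sum[of "{..<K}" "\<lambda>k. Polynomial.smult (coeff q k) (monom 1 k)"] T ij
    by (simp add: mat_poly_eval_smult carrier_matD[OF T])
qed

text \<open>Let G be the Gram matrix of the rational vectors. Dependence over the extension gives
  det G = 0, so G has a rational kernel vector v, and v is a rational dependence because the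
  quadratic form (v, G v) is a sum of squares.\<close>
lemma rat_linear_dependence_from_extension:
  fixes e :: "nat \<Rightarrow> 'i \<Rightarrow> rat" and w :: "nat \<Rightarrow> 'a :: field_char_0"
  assumes I: "finite I" and w: "l < K" "w l \<noteq> 0"
    and dep: "\<And>x. x \<in> I \<Longrightarrow> (\<Sum>j<K. w j * of_rat (e j x)) = 0"
  obtains v :: "nat \<Rightarrow> rat" and j1 where "j1 < K" "v j1 \<noteq> 0"
    and "\<And>x. x \<in> I \<Longrightarrow> (\<Sum>j<K. v j * e j x) = 0"
proof -
  have swap: "(\<Sum>j<K. (\<Sum>x\<in>I. f i x * f j x) * u j) = (\<Sum>x\<in>I. f i x * (\<Sum>j<K. u j * f j x))"
    for f :: "nat \<Rightarrow> 'i \<Rightarrow> 'b :: comm_semiring_0" and u i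
    unfolding sum_distrib_left sum_distrib_right by (subst sum.swap) (simp add: mult_ac)
  define G where "G = mat K K (\<lambda>(i, j). \<Sum>x\<in>I. e i x * e j x)"
  have G: "G \<in> carrier_mat K K" unfolding G_def by simp
  have "map_mat of_rat G *\<^sub>v vec K w = 0\<^sub>v K"
  proof (rule eq_vecI)
    fix i assume "i < dim_vec (0\<^sub>v K :: 'a vec)"
    then have i: "i < K" by simp
    have "(map_mat of_rat G *\<^sub>v vec K w) $ i = (\<Sum>j<K. (\<Sum>x\<in>I. of_rat (e i x) * of_rat (e j x)) * w j)"
      using i G by (auto simp: scalar_prod_def lessThan_atLeast0 G_def of_rat_sum of_rat_mult
          intro!: sum.cong)
    also have "\<dots> = 0"
      unfolding swap[of "\<lambda>j x. of_rat (e j x)"] by (simp add: dep)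
    finally show "(map_mat of_rat G *\<^sub>v vec K w) $ i = 0\<^sub>v K $ i" using i by simp
  qed (use G in simp)
  moreover have "vec K w \<noteq> 0\<^sub>v K"
    using w by (auto dest!: arg_cong[of _ _ "\<lambda>v. v $ l"])
  ultimately have "det (map_mat (of_rat :: rat \<Rightarrow> 'a) G) = 0"
    using det_0_iff_vec_prod_zero[of "map_mat of_rat G" K] G by (meson map_carrier_mat vec_carrier)
  then obtain v where v: "v \<in> carrier_vec K" "v \<noteq> 0\<^sub>v K" "G *\<^sub>v v = 0\<^sub>v K"
    using det_0_iff_vec_prod_zero[OF G] by auto
  have "(\<Sum>x\<in>I. (\<Sum>j<K. v $ j * e j x)\<^sup>2) = (\<Sum>i<K. v $ i * (G *\<^sub>v v) $ i)"
  proof -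
    let ?t = "\<lambda>i j x. v $ i * v $ j * (e i x * e j x)"
    have "(\<Sum>x\<in>I. (\<Sum>j<K. v $ j * e j x)\<^sup>2) = (\<Sum>x\<in>I. \<Sum>i<K. \<Sum>j<K. ?t i j x)"
      by (simp add: power2_eq_square sum_product mult_ac)
    also have "\<dots> = (\<Sum>i<K. \<Sum>x\<in>I. \<Sum>j<K. ?t i j x)"
      by (rule sum.swap)
    also have "\<dots> = (\<Sum>i<K. \<Sum>j<K. \<Sum>x\<in>I. ?t i j x)"
      by (rule sum.cong[OF refl], rule sum.swap)
    also have "\<dots> = (\<Sum>i<K. v $ i * (\<Sum>j<K. (\<Sum>x\<in>I. e i x * e j x) * v $ j))"
      by (simp add: sum_distrib_left sum_distrib_right mult_ac)
    also have "\<dots> = (\<Sum>i<K. v $ i * (G *\<^sub>v v) $ i)"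
      using v(1) G by (auto simp: scalar_prod_def lessThan_atLeast0 G_def intro!: sum.cong)
    finally show ?thesis .
  qed
  then have "(\<Sum>x\<in>I. (\<Sum>j<K. v $ j * e j x)\<^sup>2) = 0"
    using v(3) by simp
  then have "(\<Sum>j<K. v $ j * e j x) = 0" if "x \<in> I" for x
    using that I by (simp add: sum_nonneg_eq_0_iff)
  moreover obtain j1 where "j1 < K" "v $ j1 \<noteq> 0"
    using v(1,2) by (metis carrier_vecD eq_vecI index_zero_vec(1,2))
  ultimately show thesis using that by blast
qed

text \<open>An annihilator over the extension of degree k is a linear dependence among the rational
  matrices R^0, ..., R^k.\<close>
lemma is_min_poly_map_of_rat:
  fixes R :: "rat mat"
  assumes R: "R \<in> carrier_mat s s"
    and min: "is_min_poly_Q (map_mat of_rat R :: 'b :: field_char_0 mat) p"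
  shows "is_min_poly (map_mat of_rat R :: 'a :: field_char_0 mat) (map_poly of_rat p)"
proof -
  let ?Ra = "map_mat of_rat R :: 'a mat" and ?Rb = "map_mat of_rat R :: 'b mat"
  have Ra: "?Ra \<in> carrier_mat s s" and Rb: "?Rb \<in> carrier_mat s s" using R by auto
  have lp: "lead_coeff p = 1" and "mat_poly_eval (map_poly of_rat p) ?Rb = 0\<^sub>m s s"
    using min R unfolding is_min_poly_Q_def by auto
  then have ann: "mat_poly_eval (map_poly of_rat p) ?Ra = 0\<^sub>m s s"
    by (simp add: of_rat_hom.mat_poly_eval_hom_eq_0_iff[OF R])
  define e where "e k x = mat_poly_eval (monom 1 k) R $$ x" for k x
  have least: "degree p \<le> degree q" if q: "lead_coeff q = 1" "mat_poly_eval q ?Ra = 0\<^sub>m s s" for q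
  proof -
    let ?I = "{..<s} \<times> {..<s}" and ?K = "Suc (degree q)"
    have "mat_poly_eval (monom 1 k) ?Ra $$ x = of_rat (e k x)" if "x \<in> ?I" for k x
    proof -
      have "mat_poly_eval (monom 1 k) ?Ra = map_mat of_rat (mat_poly_eval (monom 1 k) R)"
        by (simp add: of_rat_hom.mat_poly_eval_hom[OF R])
      then show ?thesis
        using that R unfolding e_def by (cases x) (auto simp: mat_poly_eval_carrier_mat)
    qed
    then have dep: "(\<Sum>k<?K. coeff q k * of_rat (e k x)) = 0" if "x \<in> ?I" for x
      using that q(2) mat_poly_eval_index_monom_sum[OF Ra, of q ?K] by (cases x) auto
    obtain v j1 where v: "j1 < ?K" "v j1 \<noteq> 0"
      and vdep: "\<And>x. x \<in> ?I \<Longrightarrow> (\<Sum>k<?K. v k * e k x) = 0"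
      by (rule rat_linear_dependence_from_extension[where I = ?I and l = "degree q" and K = ?K
            and w = "coeff q" and e = e]) (use dep q(1) in auto)
    define r where "r = (\<Sum>k<?K. monom (v k) k)"
    have cr: "coeff r k = (if k < ?K then v k else 0)" for k
      unfolding r_def by (simp add: coeff_sum)
    have r0: "r \<noteq> 0" using v cr[of j1] by auto
    have deg: "degree r \<le> degree q"
      by (rule degree_le) (simp add: cr)
    have "mat_poly_eval r R = 0\<^sub>m s s"
    proof (rule eq_matI)
      fix a b assume "a < dim_row (0\<^sub>m s s :: rat mat)" "b < dim_col (0\<^sub>m s s :: rat mat)"
      then have ab: "a < s" "b < s" by auto
      have "mat_poly_eval r R $$ (a, b) = (\<Sum>k<?K. coeff r k * e k (a, b))"
        unfolding e_def by (rule mat_poly_eval_index_monom_sum[OF R _ ab]) (use deg in simp)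
      also have "\<dots> = (\<Sum>k<?K. v k * e k (a, b))"
        by (simp add: cr)
      also have "\<dots> = 0"
        using vdep ab by simp
      finally show "mat_poly_eval r R $$ (a, b) = 0\<^sub>m s s $$ (a, b)"
        using ab by simp
    qed (use R in simp_all)
    then have "mat_poly_eval (map_poly of_rat r) ?Rb = 0\<^sub>m s s"
      by (simp add: of_rat_hom.mat_poly_eval_hom_eq_0_iff[OF R])
    with deg show ?thesis
      using is_min_poly_Q_degree_le[OF Rb min r0] by simp
  qed
  show ?thesis
    unfolding is_min_poly_def using Ra lp ann least by auto
qed

section \<open>Diagonalizability\<close>

interpretation of_rat_poly_hom: map_poly_idom_hom of_rat ..

lemma of_real_of_rat: "(of_real (of_rat q) :: 'a :: real_field) = of_rat q"
  by (simp add: of_rat_def split: prod.split)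

lemma mat_poly_eval_of_rat_complex_eq_0_iff:
  fixes T :: "real mat"
  assumes T: "T \<in> carrier_mat m m"
  shows "mat_poly_eval (map_poly (of_rat :: rat \<Rightarrow> complex) q) (map_mat complex_of_real T) = 0\<^sub>m m m \<longleftrightarrow>
    mat_poly_eval (map_poly of_rat q) T = 0\<^sub>m m m"
proof -
  have "map_poly complex_of_real (map_poly of_rat q) = map_poly of_rat q"
    by (subst map_poly_map_poly) (auto simp: o_def of_real_of_rat)
  moreover have "mat_poly_eval (map_poly complex_of_real (map_poly of_rat q)) (map_mat complex_of_real T)
      = 0\<^sub>m m m \<longleftrightarrow> mat_poly_eval (map_poly of_rat q) T = 0\<^sub>m m m"
    by (rule of_real_hom.mat_poly_eval_hom_eq_0_iff[OF T])
  ultimately show ?thesis by simp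
qed

lemma rsquarefree_of_rat_if_coprime_pderiv:
  fixes p :: "rat poly"
  assumes "coprime p (pderiv p)"
  shows "rsquarefree (map_poly (of_rat :: rat \<Rightarrow> 'a :: field_char_0) p)"
proof -
  let ?c = "map_poly (of_rat :: rat \<Rightarrow> 'a)"
  obtain u v where "u * p + v * pderiv p = 1"
    using bezout_coefficients_fst_snd[of p "pderiv p"] assms by auto
  from arg_cong[OF this, of ?c] have "?c u * ?c p + ?c v * pderiv (?c p) = 1"
    by (simp add: hom_distribs)
  then have "\<not> (poly (?c p) a = 0 \<and> poly (pderiv (?c p)) a = 0)" for a
    by (auto dest: arg_cong[of _ _ "\<lambda>f. poly f a"])
  then show ?thesis
    by (simp add: rsquarefree_roots)
qed

text \<open>The polynomial q is the radical p / gcd(p, p').\<close>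
lemma radical_of_rat_poly:
  fixes p :: "rat poly"
  assumes p: "p \<noteq> 0" and nc: "\<not> coprime p (pderiv p)"
  obtains q where "q \<noteq> 0" "degree q < degree p"
    "\<And>a :: 'a :: field_char_0. poly (map_poly of_rat q) a = 0 \<longleftrightarrow> poly (map_poly of_rat p) a = 0"
proof -
  let ?c = "map_poly (of_rat :: rat \<Rightarrow> 'a)"
  define d where "d = gcd p (pderiv p)"
  have d0: "d \<noteq> 0"
    using p unfolding d_def by simp
  have "\<not> is_unit d"
    using nc unfolding d_def by (metis is_unit_gcd_iff coprime_iff_gcd_eq_1)
  then have d: "degree d > 0"
    using is_unit_iff_degree[OF d0] by (metis neq0_conv)
  obtain q where pq: "p = q * d"
    unfolding d_def by (metis dvd_def gcd_dvd1 mult.commute)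
  obtain e where pe: "pderiv p = e * d"
    unfolding d_def by (metis dvd_def gcd_dvd2 mult.commute)
  obtain r s where drs: "d = r * p + s * pderiv p"
    unfolding d_def by (metis bezout_coefficients_fst_snd)
  have q0: "q \<noteq> 0" using p pq by auto
  have deg: "degree p = degree q + degree d"
    using pq q0 d0 by (simp add: degree_mult_eq)
  then have "pderiv (?c p) \<noteq> 0"
    using d by (simp add: pderiv_eq_0_iff)
  moreover have "?c p = ?c q * ?c d" "pderiv (?c p) = ?c e * ?c d"
    "?c d = ?c r * ?c p + ?c s * pderiv (?c p)"
    using arg_cong[OF pq, of ?c] arg_cong[OF pe, of ?c] arg_cong[OF drs, of ?c]
    by (simp_all add: hom_distribs)
  ultimately have "poly (?c q) a = 0 \<longleftrightarrow> poly (?c p) a = 0" for a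
    using poly_squarefree_decomp by blast
  with q0 deg d show thesis
    using that by auto
qed

lemma similar_diagonal_if_rsquarefree_annihilator:
  fixes X :: "complex mat"
  assumes X: "X \<in> carrier_mat m m" and f: "mat_poly_eval f X = 0\<^sub>m m m" and sf: "rsquarefree f"
  shows "\<exists>D. diagonal_mat D \<and> similar_mat X D"
proof -
  from char_poly_factorized[OF X] obtain as where "char_poly X = (\<Prod>a\<leftarrow>as. [:-a, 1:])" by auto
  from jordan_nf_exists[OF X this] obtain n_as where "jordan_nf X n_as" ..
  then have sim: "similar_mat X (jordan_matrix n_as)"
    unfolding jordan_nf_def by simp
  then obtain P Q where wit: "similar_mat_wit X (jordan_matrix n_as) P Q"
    unfolding similar_mat_def by blast
  note c = similar_mat_witD2[OF X wit]
  have N: "sum_list (map fst n_as) = m"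
    using c(5) by (metis carrier_matD(1) jordan_matrix_dim(1))
  have "mat_poly_eval f (jordan_matrix n_as) = 0\<^sub>m m m"
    using mat_poly_eval_similar_mat_wit[OF similar_mat_wit_sym[OF wit], of f] f c by simp
  moreover have "\<not> [:-a, 1:] ^ 2 dvd f" for a
    using sf by (auto simp: rsquarefree_def order_divides dest: spec[of _ a])
  ultimately have "\<forall>(k, a) \<in> set n_as. k \<le> 1"
    using jordan_matrix_blocks_le_1[of f n_as] N by simp
  then show ?thesis
    using jordan_matrix_diagonal sim by blast
qed

lemma diagonalizable_C_iff_coprime_pderiv:
  fixes T :: "real mat"
  assumes T: "T \<in> carrier_mat m m" and min: "is_min_poly_Q T p"
  shows "diagonalizable_C T \<longleftrightarrow> coprime p (pderiv p)"
proof -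
  let ?Tc = "map_mat complex_of_real T" and ?c = "map_poly (of_rat :: rat \<Rightarrow> complex)"
  have Tc: "?Tc \<in> carrier_mat m m" using T by simp
  have p: "p \<noteq> 0" and "mat_poly_eval (map_poly of_rat p) T = 0\<^sub>m m m"
    using min T unfolding is_min_poly_Q_def by auto
  then have ann: "mat_poly_eval (?c p) ?Tc = 0\<^sub>m m m"
    by (simp add: mat_poly_eval_of_rat_complex_eq_0_iff[OF T])
  show ?thesis
  proof
    assume "diagonalizable_C T"
    then obtain D where D: "diagonal_mat D" "similar_mat ?Tc D"
      unfolding diagonalizable_C_def by blast
    show "coprime p (pderiv p)"
    proof (rule ccontr)
      assume "\<not> coprime p (pderiv p)"
      then obtain q where q: "q \<noteq> 0" "degree q < degree p"
        and roots: "\<And>a :: complex. poly (?c q) a = 0 \<longleftrightarrow> poly (?c p) a = 0"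
        using radical_of_rat_poly[OF p] by metis
      have "mat_poly_eval (?c q) ?Tc = 0\<^sub>m m m"
        using similar_diagonal_annihilator_roots[OF Tc D(2,1) ann] roots by blast
      then have "degree p \<le> degree q"
        using is_min_poly_Q_degree_le[OF T min q(1)] by (simp add: mat_poly_eval_of_rat_complex_eq_0_iff[OF T])
      with q(2) show False by simp
    qed
  next
    assume "coprime p (pderiv p)"
    then show "diagonalizable_C T"
      unfolding diagonalizable_C_def
      using similar_diagonal_if_rsquarefree_annihilator[OF Tc ann rsquarefree_of_rat_if_coprime_pderiv]
      by blast
  qed
qed

section \<open>Lattices and block matrices\<close>

lemma mat_poly_eval_eq_0_iff_blocks:
  fixes A B T L :: "'a :: field mat"
  assumes A: "A \<in> carrier_mat n1 n1" and B: "B \<in> carrier_mat n2 n2"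
    and T: "T \<in> carrier_mat (n1 + n2) (n1 + n2)"
    and L: "L \<in> carrier_mat (n1 + n2) (n1 + n2)" "invertible_mat L"
    and intertwining: "four_block_mat A (0\<^sub>m n1 n2) (0\<^sub>m n2 n1) B * L = L * T"
  shows "mat_poly_eval f T = 0\<^sub>m (n1 + n2) (n1 + n2) \<longleftrightarrow>
    mat_poly_eval f A = 0\<^sub>m n1 n1 \<and> mat_poly_eval f B = 0\<^sub>m n2 n2"
proof -
  let ?n = "n1 + n2" and ?M = "four_block_mat A (0\<^sub>m n1 n2) (0\<^sub>m n2 n1) B"
  let ?FM = "mat_poly_eval f ?M" and ?FT = "mat_poly_eval f T"
  have M: "?M \<in> carrier_mat ?n ?n" using A B by simp
  have FM: "?FM \<in> carrier_mat ?n ?n" and FT: "?FT \<in> carrier_mat ?n ?n"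
    using M T by (auto simp: mat_poly_eval_carrier_mat)
  obtain L' where L': "L' \<in> carrier_mat ?n ?n" "L * L' = 1\<^sub>m ?n" "L' * L = 1\<^sub>m ?n"
    using L by (elim invertible_matE)
  have FML: "?FM * L = L * ?FT"
    by (rule mat_poly_eval_intertwine[OF M T L(1) intertwining])
  have "?FT = L' * (?FM * L)"
    unfolding FML using L(1) L' FT
    by (simp add: assoc_mult_mat[of L' ?n ?n L ?n ?FT ?n, symmetric] left_mult_one_mat[OF FT])
  moreover have "?FM = (L * ?FT) * L'"
    unfolding FML[symmetric] using L(1) L' FM
    by (simp add: assoc_mult_mat[of ?FM ?n ?n L ?n L' ?n] right_mult_one_mat[OF FM])
  ultimately have "?FT = 0\<^sub>m ?n ?n \<longleftrightarrow> ?FM = 0\<^sub>m ?n ?n"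
    using L(1) L'(1) by auto
  then show ?thesis
    unfolding mat_poly_eval_four_block_diag[OF A B]
    by (simp add: four_block_diag_eq_0_iff A B mat_poly_eval_carrier_mat)
qed

lemma rat_vec_common_denominator:
  assumes w: "(w :: rat vec) \<in> carrier_vec s"
  obtains d :: int and z where "d > 0" "z \<in> carrier_vec s" "map_vec rat_of_int z = of_int d \<cdot>\<^sub>v w"
proof -
  define a where "a i = fst (quotient_of (w $ i))" for i
  define b where "b i = snd (quotient_of (w $ i))" for i
  define d where "d = (\<Prod>i<s. b i)"
  have b: "b i > 0" for i unfolding b_def by (rule quotient_of_denom_pos')
  have wi: "w $ i = of_int (a i) / of_int (b i)" for i
    unfolding a_def b_def by (rule quotient_of_div) simp
  have bd: "b i dvd d" if "i < s" for i
    unfolding d_def using that by (intro dvd_prodI) auto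
  define z where "z = vec s (\<lambda>i. a i * (d div b i))"
  have "map_vec rat_of_int z = of_int d \<cdot>\<^sub>v w"
  proof (rule eq_vecI)
    fix i assume "i < dim_vec (of_int d \<cdot>\<^sub>v w)"
    then have i: "i < s" using w by simp
    have "rat_of_int (a i * (d div b i)) = of_int d * w $ i"
      using b[of i] unfolding wi of_int_mult of_int_div[OF bd[OF i]] by simp
    then show "map_vec rat_of_int z $ i = (of_int d \<cdot>\<^sub>v w) $ i"
      using i w unfolding z_def by simp
  qed (use w in \<open>simp add: z_def\<close>)
  moreover have "d > 0" unfolding d_def using b by (simp add: prod_pos)
  moreover have "z \<in> carrier_vec s" unfolding z_def by simp
  ultimately show thesis
    using that by blast
qed

text \<open>Clearing denominators turns a rational vector into an integer one, whose lattice point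
  agrees with the origin on the coordinates in I.\<close>
lemma lattice_rat_vec_eq_0:
  fixes L :: "real mat" and w :: "rat vec"
  assumes L: "L \<in> carrier_mat s s" "invertible_mat L" and w: "w \<in> carrier_vec s"
    and I: "I \<subseteq> {..<s}"
    and inj: "\<And>x y. x \<in> lattice s L \<Longrightarrow> y \<in> lattice s L \<Longrightarrow> (\<forall>i\<in>I. x $ i = y $ i) \<Longrightarrow> x = y"
    and zero: "\<And>i. i \<in> I \<Longrightarrow> (L *\<^sub>v map_vec of_rat w) $ i = 0"
  shows "w = 0\<^sub>v s"
proof -
  obtain d z where d: "d > 0" and z: "z \<in> carrier_vec s" and dz: "map_vec rat_of_int z = of_int d \<cdot>\<^sub>v w"
    using rat_vec_common_denominator[OF w] by blast
  let ?u = "map_vec real_of_int z"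
  have u: "?u = real_of_int d \<cdot>\<^sub>v map_vec of_rat w"
  proof (rule eq_vecI)
    fix i assume "i < dim_vec (real_of_int d \<cdot>\<^sub>v map_vec of_rat w)"
    then have i: "i < s" using w by simp
    have "rat_of_int (z $ i) = of_int d * w $ i"
      using arg_cong[OF dz, of "\<lambda>v. v $ i"] i z w by simp
    then have "(of_rat (of_int (z $ i)) :: real) = of_rat (of_int d * w $ i)" by simp
    then show "?u $ i = (real_of_int d \<cdot>\<^sub>v map_vec of_rat w) $ i"
      using i z w by (simp add: of_rat_mult)
  qed (use w z in simp)
  have lattice: "L *\<^sub>v map_vec real_of_int z' \<in> lattice s L" if "z' \<in> carrier_vec s" for z'
    unfolding lattice_def using that by blast
  have "L *\<^sub>v 0\<^sub>v s = 0\<^sub>v s"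
    using L(1) by (intro eq_vecI) (auto simp: row_def)
  then have zero_lattice: "0\<^sub>v s \<in> lattice s L"
    using lattice[of "0\<^sub>v s"] by (simp add: of_int_hom.vec_hom_zero)
  have "L *\<^sub>v ?u = real_of_int d \<cdot>\<^sub>v (L *\<^sub>v map_vec of_rat w)"
    unfolding u using L(1) w by (simp add: mult_mat_vec)
  then have "(L *\<^sub>v ?u) $ i = 0\<^sub>v s $ i" if "i \<in> I" for i
    using zero[OF that] that I L(1) by auto
  then have Lu: "L *\<^sub>v ?u = 0\<^sub>v s"
    using inj[OF lattice[OF z] zero_lattice] by blast
  obtain L' where L': "L' \<in> carrier_mat s s" "L' * L = 1\<^sub>m s"
    using L by (elim invertible_matE)
  have "?u = L' *\<^sub>v (L *\<^sub>v ?u)"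
    using L(1) L' z by (simp add: assoc_mult_mat_vec[symmetric, of _ s s _ s])
  also have "\<dots> = 0\<^sub>v s"
    unfolding Lu using L'(1) by (intro eq_vecI) (auto simp: row_def)
  finally have dw: "real_of_int d \<cdot>\<^sub>v map_vec of_rat w = 0\<^sub>v s"
    unfolding u .
  have "real_of_int d * of_rat (w $ i) = 0" if "i < s" for i
    using arg_cong[OF dw, of "\<lambda>v. v $ i"] that w by simp
  then show ?thesis
    using d w by (intro eq_vecI) auto
qed

lemma int_mat_annihilated_if_lattice_rows_vanish:
  fixes L M :: "real mat" and C :: "int mat" and f :: "rat poly"
  assumes L: "L \<in> carrier_mat s s" "invertible_mat L" and M: "M \<in> carrier_mat s s"
    and C: "C \<in> carrier_mat s s" and intertwining: "M * L = L * map_mat of_int C"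
    and I: "I \<subseteq> {..<s}"
    and inj: "\<And>x y. x \<in> lattice s L \<Longrightarrow> y \<in> lattice s L \<Longrightarrow> (\<forall>i\<in>I. x $ i = y $ i) \<Longrightarrow> x = y"
    and rows: "\<And>i k. i \<in> I \<Longrightarrow> k < s \<Longrightarrow> mat_poly_eval (map_poly of_rat f) M $$ (i, k) = 0"
  shows "mat_poly_eval (map_poly of_rat f) (map_mat of_int C :: real mat) = 0\<^sub>m s s"
proof -
  let ?Cq = "map_mat of_int C :: rat mat" and ?Cr = "map_mat of_int C :: real mat"
  let ?F = "mat_poly_eval f ?Cq" and ?FM = "mat_poly_eval (map_poly of_rat f) M"
  have Cq: "?Cq \<in> carrier_mat s s" and Cr: "?Cr \<in> carrier_mat s s" using C by auto
  have F: "?F \<in> carrier_mat s s" using Cq by (rule mat_poly_eval_carrier_mat)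
  have FM: "?FM \<in> carrier_mat s s" using M by (rule mat_poly_eval_carrier_mat)
  have Cqr: "map_mat of_rat ?Cq = ?Cr" using C by (intro eq_matI) auto
  have FCr: "mat_poly_eval (map_poly of_rat f) ?Cr = map_mat of_rat ?F"
    unfolding Cqr[symmetric] of_rat_hom.mat_poly_eval_hom[OF Cq] ..
  have cols: "col ?F j = 0\<^sub>v s" if j: "j < s" for j
  proof (rule lattice_rat_vec_eq_0[OF L _ I inj])
    show "col ?F j \<in> carrier_vec s" using F j by simp
    fix i assume i: "i \<in> I"
    have "col (map_mat of_rat ?F :: real mat) j = map_vec of_rat (col ?F j)"
      using j by (intro col_map_mat) (simp add: carrier_matD[OF C])
    then have "L *\<^sub>v map_vec of_rat (col ?F j) = col (L * map_mat of_rat ?F) j"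
      using col_mult2[OF L(1) _ j, of "map_mat of_rat ?F"] F by simp
    also have "L * map_mat of_rat ?F = ?FM * L"
      unfolding FCr[symmetric] by (rule mat_poly_eval_intertwine[OF M Cr L(1) intertwining, symmetric])
    finally have "(L *\<^sub>v map_vec of_rat (col ?F j)) $ i = row ?FM i \<bullet> col L j"
      using i I j by (auto simp: carrier_matD[OF M] carrier_matD[OF L(1)])
    also have "\<dots> = 0"
      using rows[OF i] i I by (auto simp: scalar_prod_def carrier_matD[OF M] carrier_matD[OF L(1)])
    finally show "(L *\<^sub>v map_vec of_rat (col ?F j)) $ i = 0" .
  qed
  have "?F = 0\<^sub>m s s"
  proof (rule eq_matI)
    fix i j assume "i < dim_row (0\<^sub>m s s :: rat mat)" "j < dim_col (0\<^sub>m s s :: rat mat)"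
    then have ij: "i < s" "j < s" by auto
    then have "?F $$ (i, j) = col ?F j $ i" by (simp add: carrier_matD[OF C])
    then show "?F $$ (i, j) = 0\<^sub>m s s $$ (i, j)" using cols ij by simp
  qed (simp_all add: carrier_matD[OF C])
  then show ?thesis
    unfolding FCr by (intro eq_matI) auto
qed

lemma cut_and_project_rat_annihilators:
  fixes A B L :: "real mat" and C :: "int mat" and f :: "rat poly"
  assumes cps: "generic_cps n s L" and A: "A \<in> carrier_mat n n"
    and B: "B \<in> carrier_mat (s - n) (s - n)" and C: "C \<in> carrier_mat s s"
    and intertwining: "four_block_mat A (0\<^sub>m n (s - n)) (0\<^sub>m (s - n) n) B * L = L * map_mat real_of_int C"
  shows "mat_poly_eval (map_poly of_rat f) (map_mat real_of_int C) = 0\<^sub>m s s \<longleftrightarrow>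
      mat_poly_eval (map_poly of_rat f) A = 0\<^sub>m n n"
    and "mat_poly_eval (map_poly of_rat f) (map_mat real_of_int C) = 0\<^sub>m s s \<longleftrightarrow>
      mat_poly_eval (map_poly of_rat f) B = 0\<^sub>m (s - n) (s - n)"
proof -
  from cps have n: "n < s" and L: "L \<in> carrier_mat s s" "invertible_mat L"
    and par: "inj_on (proj_par n) (lattice s L)" and perp: "inj_on (proj_perp n s) (lattice s L)"
    unfolding generic_cps_def by auto
  let ?M = "four_block_mat A (0\<^sub>m n (s - n)) (0\<^sub>m (s - n) n) B"
  let ?Cr = "map_mat real_of_int C" and ?f = "map_poly of_rat f"
  have s: "n + (s - n) = s" using n by simp
  have M: "?M \<in> carrier_mat s s" using A B s by (metis four_block_carrier_mat)
  have Cr: "?Cr \<in> carrier_mat s s" using C by simp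
  have blocks: "mat_poly_eval ?f ?Cr = 0\<^sub>m s s \<longleftrightarrow>
      mat_poly_eval ?f A = 0\<^sub>m n n \<and> mat_poly_eval ?f B = 0\<^sub>m (s - n) (s - n)"
    using mat_poly_eval_eq_0_iff_blocks[of A n B "s - n" ?Cr L ?f] A B Cr L intertwining unfolding s by simp
  have "mat_poly_eval ?f ?Cr = 0\<^sub>m s s" if "mat_poly_eval ?f A = 0\<^sub>m n n"
  proof (rule int_mat_annihilated_if_lattice_rows_vanish[OF L M C intertwining, of "{..<n}"])
    show "x = y" if "x \<in> lattice s L" "y \<in> lattice s L" "\<forall>i\<in>{..<n}. x $ i = y $ i" for x y
      using inj_onD[OF par _ that(1,2)] that(3) by (simp add: proj_par_def vec_eq_iff)
  qed (use n that A B in \<open>auto simp: mat_poly_eval_four_block_diag mat_poly_eval_carrier_mat\<close>)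
  moreover have "mat_poly_eval ?f ?Cr = 0\<^sub>m s s" if "mat_poly_eval ?f B = 0\<^sub>m (s - n) (s - n)"
  proof (rule int_mat_annihilated_if_lattice_rows_vanish[OF L M C intertwining, of "{n..<s}"])
    show "x = y" if "x \<in> lattice s L" "y \<in> lattice s L" "\<forall>i\<in>{n..<s}. x $ i = y $ i" for x y
      using inj_onD[OF perp _ that(1,2)] that(3) n by (simp add: proj_perp_def vec_eq_iff)
  qed (use n that A B in \<open>auto simp: mat_poly_eval_four_block_diag mat_poly_eval_carrier_mat\<close>)
  ultimately show "mat_poly_eval ?f ?Cr = 0\<^sub>m s s \<longleftrightarrow> mat_poly_eval ?f A = 0\<^sub>m n n"
    and "mat_poly_eval ?f ?Cr = 0\<^sub>m s s \<longleftrightarrow> mat_poly_eval ?f B = 0\<^sub>m (s - n) (s - n)"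
    using blocks by blast+
qed

theorem proposition4:
  fixes n s :: nat and L A B :: "real mat" and C :: "int mat"
  assumes "generic_cps n s L"
    and "self_similarity n s L A"
    and "B \<in> carrier_mat (s - n) (s - n)"
    and "C \<in> carrier_mat s s"
    and "four_block_mat A (0\<^sub>m n (s - n)) (0\<^sub>m (s - n) n) B * L = L * map_mat real_of_int C"
  shows "(\<exists>p :: rat poly.
           is_min_poly_Q A p \<and> is_min_poly_Q B p \<and>
           is_min_poly_Q (map_mat real_of_int C) p \<and>
           is_min_poly (map_mat complex_of_int C) (map_poly of_rat p)) \<and>
         (invertible_mat A \<longleftrightarrow> invertible_mat B) \<and>
         (invertible_mat B \<longleftrightarrow> invertible_mat (map_mat real_of_int C)) \<and>
         (diagonalizable_C A \<longleftrightarrow> diagonalizable_C B) \<and>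
         (diagonalizable_C B \<longleftrightarrow> diagonalizable_C (map_mat real_of_int C))"
proof -
  from assms(2) have A: "A \<in> carrier_mat n n" unfolding self_similarity_def by auto
  note B = assms(3) and C = assms(4)
  note ann = cut_and_project_rat_annihilators[OF assms(1) A B C assms(5)]
  let ?Cq = "map_mat of_int C :: rat mat" and ?Cr = "map_mat real_of_int C"
  have Cr: "?Cr \<in> carrier_mat s s" and Cqr: "map_mat of_rat ?Cq = ?Cr"
    and Cqc: "map_mat of_rat ?Cq = map_mat complex_of_int C"
    using C by (auto intro!: eq_matI)
  have "\<exists>p. is_min_poly_Q (map_mat of_rat ?Cq :: real mat) p"
    using C by (intro is_min_poly_Q_exists) simp
  then obtain p where minC: "is_min_poly_Q ?Cr p"
    unfolding Cqr by blast
  have minA: "is_min_poly_Q A p" and minB: "is_min_poly_Q B p"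
    by (rule is_min_poly_Q_cong[THEN iffD2, OF _ minC], use A B Cr ann in auto)+
  have "is_min_poly (map_mat complex_of_int C) (map_poly of_rat p)"
    unfolding Cqc[symmetric] by (rule is_min_poly_map_of_rat[OF _ minC[folded Cqr]]) (use C in simp)
  then show ?thesis
    using minA minB minC
      invertible_mat_iff_min_poly_Q_coeff_0[OF A minA] invertible_mat_iff_min_poly_Q_coeff_0[OF B minB]
      invertible_mat_iff_min_poly_Q_coeff_0[OF Cr minC] diagonalizable_C_iff_coprime_pderiv[OF A minA]
      diagonalizable_C_iff_coprime_pderiv[OF B minB] diagonalizable_C_iff_coprime_pderiv[OF Cr minC]
    by auto
qed

end
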